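(* In the deterministic generalized top-$k$ selective gossip setting described in the context (with $G$ connected), let $\{a,b\}\in E$. If for some candidate $j\in[n]$ and some agent $i\in[m]$ we have $X_{ij}(\infty)>\alpha_{ab}$, then $j\in S^\infty_{a'b'}$ for every $\{a',b'\}\in E$.
   Context: Fix integers $m\ge2$, $n\ge1$, $k\in[n]$. For $v\in\mathbb{R}^n$ let $\sigma$ be a permutation of $[n]$ with $v_{\sigma(1)}\ge\cdots\ge v_{\sigma(n)}$ and set $T_k(v)=\{j\in[n]: v_j\ge v_{\sigma(k)}\}$. Let $\{i_1(t),i_2(t)\}_{t\ge0}$ be a deterministic sequence of unordered pairs of distinct agents in $[m]$, and let $E$ be the set of pairs $\{a,b\}$ with $\{i_1(t),i_2(t)\}=\{a,b\}$ for infinitely many $t$; assume the graph $G=([m],E)$ is connected. Let $X(0)\in\mathbb{R}^{m\times n}$ and define $X(t)$ by: $S(t)=T_k(X_{i_1(t)}(t))\cup T_k(X_{i_2(t)}(t))$ (where $X_i(t)$ is row $i$), $X_{ij}(t+1)=\tfrac12(X_{i_1(t)j}(t)+X_{i_2(t)j}(t))$ if $i\in\{i_1(t),i_2(t)\}$ and $j\in S(t)$, and $X_{ij}(t+1)=X_{ij}(t)$ otherwise. The limit $X(\infty)=\lim_{t\to\infty}X(t)$ exists. For $\{a,b\}\in E$ let $\beta_{ab}(s)$ be the $s$-th time $t$ with $\{i_1(t),i_2(t)\}=\{a,b\}$, let $S^\infty_{ab}=\bigcap_{t\ge0}\bigcup_{s\ge t}S(\beta_{ab}(s))$, and $\alpha_{ab}=\min_{j\in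 S^\infty_{ab}}X_{aj}(\infty)$ (which also equals $\min_{j\in S^\infty_{ab}}X_{bj}(\infty)$). *)

theory Defs
  imports Complex_Main "HOL-Combinatorics.Permutations" "HOL-Library.Infinite_Set"
begin

text \<open>Agents are indexed by {1..m}, candidates by {1..n}. A vector in R^n is a
function nat => real (only the values on {1..n} matter).\<close>

definition kth_val :: "nat \<Rightarrow> nat \<Rightarrow> (nat \<Rightarrow> real) \<Rightarrow> real" where
  "kth_val n k v = v ((SOME \<sigma>. \<sigma> permutes {1..n} \<and>
      (\<forall>p q. 1 \<le> p \<longrightarrow> p \<le> q \<longrightarrow> q \<le> n \<longrightarrow> v (\<sigma> q) \<le> v (\<sigma> p))) k)"

definition topk :: "nat \<Rightarrow> nat \<Rightarrow> (nat \<Rightarrow> real) \<Rightarrow> nat set" where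
  "topk n k v = {j \<in> {1..n}. v j \<ge> kth_val n k v}"

text \<open>The gossip dynamics: gossip n k i1 i2 X0 t i j = X_{ij}(t).\<close>
primrec gossip :: "nat \<Rightarrow> nat \<Rightarrow> (nat \<Rightarrow> nat) \<Rightarrow> (nat \<Rightarrow> nat) \<Rightarrow> (nat \<Rightarrow> nat \<Rightarrow> real)
    \<Rightarrow> nat \<Rightarrow> nat \<Rightarrow> nat \<Rightarrow> real" where
  "gossip n k i1 i2 X0 0 = X0"
| "gossip n k i1 i2 X0 (Suc t) =
     (let X = gossip n k i1 i2 X0 t;
          S = topk n k (X (i1 t)) \<union> topk n k (X (i2 t))
      in (\<lambda>i j. if (i = i1 t \<or> i = i2 t) \<and> j \<in> S
                 then (X (i1 t) j + X (i2 t) j) / 2 else X i j))"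

definition selS :: "nat \<Rightarrow> nat \<Rightarrow> (nat \<Rightarrow> nat) \<Rightarrow> (nat \<Rightarrow> nat) \<Rightarrow> (nat \<Rightarrow> nat \<Rightarrow> real)
    \<Rightarrow> nat \<Rightarrow> nat set" where
  "selS n k i1 i2 X0 t =
     topk n k (gossip n k i1 i2 X0 t (i1 t)) \<union> topk n k (gossip n k i1 i2 X0 t (i2 t))"

definition edges :: "(nat \<Rightarrow> nat) \<Rightarrow> (nat \<Rightarrow> nat) \<Rightarrow> nat set set" where
  "edges i1 i2 = {e. infinite {t. {i1 t, i2 t} = e}}"

definition graph_connected :: "nat \<Rightarrow> nat set set \<Rightarrow> bool" where
  "graph_connected m E \<longleftrightarrow>
     (\<forall>a\<in>{1..m}. \<forall>b\<in>{1..m}. (a, b) \<in> {(x, y). {x, y} \<in> E}\<^sup>*)"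

text \<open>beta_e(s): the s-th time (counting from 0) at which pair e is activated.\<close>
definition beta :: "(nat \<Rightarrow> nat) \<Rightarrow> (nat \<Rightarrow> nat) \<Rightarrow> nat set \<Rightarrow> nat \<Rightarrow> nat" where
  "beta i1 i2 e s = enumerate {t. {i1 t, i2 t} = e} s"

definition Sinf :: "nat \<Rightarrow> nat \<Rightarrow> (nat \<Rightarrow> nat) \<Rightarrow> (nat \<Rightarrow> nat) \<Rightarrow> (nat \<Rightarrow> nat \<Rightarrow> real)
    \<Rightarrow> nat set \<Rightarrow> nat set" where
  "Sinf n k i1 i2 X0 e = (\<Inter>t. \<Union>s\<in>{t..}. selS n k i1 i2 X0 (beta i1 i2 e s))"

definition alpha :: "nat \<Rightarrow> nat \<Rightarrow> (nat \<Rightarrow> nat) \<Rightarrow> (nat \<Rightarrow> nat) \<Rightarrow> (nat \<Rightarrow> nat \<Rightarrow> real)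
    \<Rightarrow> (nat \<Rightarrow> nat \<Rightarrow> real) \<Rightarrow> nat \<Rightarrow> nat \<Rightarrow> real" where
  "alpha n k i1 i2 X0 Xinf a b = Min (Xinf a ` Sinf n k i1 i2 X0 {a, b})"

end

theory Submission
  imports Defs
begin

text \<open>
  Let \<open>K\<^sub>i\<close> be the \<open>k\<close>-th largest entry of the limit row \<open>X\<^sub>i(\<infinity>)\<close>. Fewer than \<open>k\<close> entries
  of a vector exceed its \<open>k\<close>-th largest value, while \<open>T\<^sub>k\<close> always has at least \<open>k\<close> elements;
  hence a candidate \<open>j\<close> with \<open>X\<^sub>i\<^sub>j(\<infinity>) > K\<^sub>i\<close> is eventually in \<open>T\<^sub>k(X\<^sub>i(t))\<close>, and one with
  \<open>X\<^sub>i\<^sub>j(\<infinity>) < K\<^sub>i\<close> eventually is not.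

  Along an edge \<open>{a,b}\<close>, every \<open>j \<in> S\<^sup>\<infinity>\<^sub>a\<^sub>b\<close> is averaged infinitely often, so
  \<open>X\<^sub>a\<^sub>j(\<infinity>) = X\<^sub>b\<^sub>j(\<infinity>)\<close>; and at late activation times \<open>T\<^sub>k(X\<^sub>a(t))\<close> consists of candidates
  \<open>j \<in> S\<^sup>\<infinity>\<^sub>a\<^sub>b\<close> with \<open>X\<^sub>a\<^sub>j(\<infinity>) \<ge> K\<^sub>a\<close>. Counting these \<open>k\<close> candidates in row \<open>b\<close> gives
  \<open>K\<^sub>a \<le> K\<^sub>b\<close>, so \<open>K\<close> is constant on the connected graph and \<open>\<alpha>\<^sub>a\<^sub>b \<ge> K\<close>. A candidate with
  \<open>X\<^sub>i\<^sub>j(\<infinity>) > K\<close> is therefore eventually always selected by \<open>i\<close>, lies in \<open>S\<^sup>\<infinity>\<close> of every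
  edge at \<open>i\<close>, keeps its limit across that edge, and so propagates through the whole graph.
\<close>

lemma sorting_permutation_exists:
  fixes v :: "nat \<Rightarrow> real"
  shows "\<exists>\<sigma>. \<sigma> permutes {1..n} \<and>
      (\<forall>p q. 1 \<le> p \<longrightarrow> p \<le> q \<longrightarrow> q \<le> n \<longrightarrow> v (\<sigma> q) \<le> v (\<sigma> p))"
proof -
  define xs where "xs = sort_key (\<lambda>j. - v j) [1..<n+1]"
  define \<sigma> where "\<sigma> p = (if p \<in> {1..n} then xs ! (p - 1) else p)" for p
  have len: "length xs = n" and "distinct xs" and "set xs = {1..n}"
    by (auto simp: xs_def)
  have "bij_betw (\<lambda>p. p - 1) {1..n} {..<n}"
    by (rule bij_betw_byWitness[where f' = Suc]) (auto simp: image_iff)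
  moreover have "bij_betw ((!) xs) {..<n} {1..n}"
    using len \<open>distinct xs\<close> \<open>set xs = {1..n}\<close> by (simp add: bij_betw_nth)
  ultimately have "bij_betw ((!) xs \<circ> (\<lambda>p. p - 1)) {1..n} {1..n}"
    by (rule bij_betw_trans)
  then have "bij_betw \<sigma> {1..n} {1..n}"
    by (rule bij_betw_cong[THEN iffD2, rotated]) (simp add: \<sigma>_def)
  then have "\<sigma> permutes {1..n}"
    by (rule bij_imp_permutes) (auto simp: \<sigma>_def)
  moreover have "v (\<sigma> q) \<le> v (\<sigma> p)" if "1 \<le> p" "p \<le> q" "q \<le> n" for p q
  proof -
    have "sorted (map (\<lambda>j. - v j) xs)"
      by (simp add: xs_def)
    then have "- v (xs ! (p - 1)) \<le> - v (xs ! (q - 1))"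
      using that len by (auto simp: sorted_iff_nth_mono)
    then show ?thesis
      using that by (simp add: \<sigma>_def)
  qed
  ultimately show ?thesis
    by blast
qed

lemma kth_val_sorting:
  obtains \<sigma> where "\<sigma> permutes {1..n}"
    and "\<And>p q. 1 \<le> p \<Longrightarrow> p \<le> q \<Longrightarrow> q \<le> n \<Longrightarrow> v (\<sigma> q) \<le> v (\<sigma> p)"
    and "kth_val n k v = v (\<sigma> k)"
proof -
  define \<sigma> where "\<sigma> = (SOME \<sigma>. \<sigma> permutes {1..n} \<and>
      (\<forall>p q. 1 \<le> p \<longrightarrow> p \<le> q \<longrightarrow> q \<le> n \<longrightarrow> v (\<sigma> q) \<le> v (\<sigma> p)))"
  have "\<sigma> permutes {1..n} \<and>
      (\<forall>p q. 1 \<le> p \<longrightarrow> p \<le> q \<longrightarrow> q \<le> n \<longrightarrow> v (\<sigma> q) \<le> v (\<sigma> p))"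
    unfolding \<sigma>_def using sorting_permutation_exists[where v = v and n = n] by (rule someI_ex)
  then have "\<sigma> permutes {1..n}"
    and "\<And>p q. 1 \<le> p \<Longrightarrow> p \<le> q \<Longrightarrow> q \<le> n \<Longrightarrow> v (\<sigma> q) \<le> v (\<sigma> p)"
    by auto
  moreover have "kth_val n k v = v (\<sigma> k)"
    by (simp add: kth_val_def \<sigma>_def)
  ultimately show ?thesis
    by (rule that)
qed

lemma topk_subset: "topk n k v \<subseteq> {1..n}"
  by (auto simp: topk_def)

lemma card_topk_ge:
  assumes "k \<le> n"
  shows "k \<le> card (topk n k v)"
proof -
  obtain \<sigma> where \<sigma>: "\<sigma> permutes {1..n}"
    and sorted: "\<And>p q. 1 \<le> p \<Longrightarrow> p \<le> q \<Longrightarrow> q \<le> n \<Longrightarrow> v (\<sigma> q) \<le> v (\<sigma> p)"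
    and kth: "kth_val n k v = v (\<sigma> k)"
    by (fact kth_val_sorting)
  have "\<sigma> ` {1..k} \<subseteq> topk n k v"
  proof
    fix i
    assume "i \<in> \<sigma> ` {1..k}"
    then obtain p where p: "p \<in> {1..k}" "i = \<sigma> p"
      by blast
    then have "i \<in> {1..n}"
      using assms permutes_in_image[OF \<sigma>, of p] by simp
    moreover have "v (\<sigma> k) \<le> v i"
      using p assms sorted[of p k] by simp
    ultimately show "i \<in> topk n k v"
      by (simp add: topk_def kth)
  qed
  then have "card (\<sigma> ` {1..k}) \<le> card (topk n k v)"
    by (rule card_mono[OF finite_subset[OF topk_subset finite_atLeastAtMost]])
  moreover have "card (\<sigma> ` {1..k}) = k"
    using card_image[OF permutes_inj_on[OF \<sigma>]] by simp
  ultimately show ?thesis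
    by simp
qed

lemma card_above_kth_val_less:
  assumes "1 \<le> k"
  shows "card {j \<in> {1..n}. kth_val n k v < v j} < k"
proof -
  obtain \<sigma> where \<sigma>: "\<sigma> permutes {1..n}"
    and sorted: "\<And>p q. 1 \<le> p \<Longrightarrow> p \<le> q \<Longrightarrow> q \<le> n \<Longrightarrow> v (\<sigma> q) \<le> v (\<sigma> p)"
    and kth: "kth_val n k v = v (\<sigma> k)"
    by (fact kth_val_sorting)
  have "{j \<in> {1..n}. kth_val n k v < v j} \<subseteq> \<sigma> ` {1..<k}"
  proof
    fix j assume j: "j \<in> {j \<in> {1..n}. kth_val n k v < v j}"
    then obtain p where p: "p \<in> {1..n}" "j = \<sigma> p"
      using permutes_image[OF \<sigma>] by blast
    have "p < k"
    proof (rule ccontr)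
      assume "\<not> p < k"
      then have "v j \<le> kth_val n k v"
        using p assms sorted[of k p] by (simp add: kth)
      then show False
        using j by simp
    qed
    then show "j \<in> \<sigma> ` {1..<k}"
      using p by auto
  qed
  then have "card {j \<in> {1..n}. kth_val n k v < v j} \<le> card (\<sigma> ` {1..<k})"
    by (intro card_mono) simp_all
  also have "\<dots> \<le> card {1..<k}"
    by (rule card_image_le) simp
  finally show ?thesis
    using assms by simp
qed

lemma topk_not_subset_above_kth_val:
  assumes "1 \<le> k" "k \<le> n"
  shows "\<not> topk n k v \<subseteq> {j \<in> {1..n}. kth_val n k w < w j}"
proof
  assume "topk n k v \<subseteq> {j \<in> {1..n}. kth_val n k w < w j}"
  then have "card (topk n k v) \<le> card {j \<in> {1..n}. kth_val n k w < w j}"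
    by (intro card_mono) simp_all
  then show False
    using card_topk_ge[OF assms(2), of v] card_above_kth_val_less[OF assms(1), of n w] by linarith
qed

lemma mem_topk_if_close:
  assumes "1 \<le> k" "k \<le> n" "j \<in> {1..n}"
    and close: "\<forall>i\<in>{1..n}. \<bar>v i - w i\<bar> < (w j - kth_val n k w) / 2"
  shows "j \<in> topk n k v"
proof (rule ccontr)
  assume "j \<notin> topk n k v"
  then have below: "v j < kth_val n k v"
    using assms(3) by (auto simp: topk_def)
  have "kth_val n k w < w i" if "i \<in> topk n k v" for i
  proof -
    have i: "i \<in> {1..n}" and "kth_val n k v \<le> v i"
      using that by (auto simp: topk_def)
    then show ?thesis
      using bspec[OF close i] bspec[OF close assms(3)] below unfolding abs_less_iff by auto
  qed
  then have "topk n k v \<subseteq> {i \<in> {1..n}. kth_val n k w < w i}"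
    using topk_subset by blast
  then show False
    using topk_not_subset_above_kth_val[OF assms(1,2)] by blast
qed

lemma not_mem_topk_if_close:
  assumes "1 \<le> k" "k \<le> n" "j \<in> {1..n}"
    and close: "\<forall>i\<in>{1..n}. \<bar>v i - w i\<bar> < (kth_val n k w - w j) / 2"
  shows "j \<notin> topk n k v"
proof
  assume "j \<in> topk n k v"
  then have above: "kth_val n k v \<le> v j"
    by (auto simp: topk_def)
  have "kth_val n k v < v i" if "i \<in> topk n k w" for i
  proof -
    have i: "i \<in> {1..n}" and "kth_val n k w \<le> w i"
      using that by (auto simp: topk_def)
    then show ?thesis
      using bspec[OF close i] bspec[OF close assms(3)] above unfolding abs_less_iff by auto
  qed
  then have "topk n k w \<subseteq> {i \<in> {1..n}. kth_val n k v < v i}"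
    using topk_subset by blast
  then show False
    using topk_not_subset_above_kth_val[OF assms(1,2)] by blast
qed

lemma eventually_uniformly_close:
  fixes V :: "'a \<Rightarrow> nat \<Rightarrow> real"
  assumes "finite A" "\<delta> > 0" "\<And>i. i \<in> A \<Longrightarrow> ((\<lambda>t. V t i) \<longlongrightarrow> w i) F"
  shows "\<forall>\<^sub>F t in F. \<forall>i\<in>A. \<bar>V t i - w i\<bar> < \<delta>"
  using assms by (simp add: eventually_ball_finite tendsto_iff dist_real_def)

lemma eventually_mem_topk:
  assumes "1 \<le> k" "k \<le> n" "j \<in> {1..n}" "kth_val n k w < w j"
    and "\<And>i. i \<in> {1..n} \<Longrightarrow> ((\<lambda>t. V t i) \<longlongrightarrow> w i) F"
  shows "\<forall>\<^sub>F t in F. j \<in> topk n k (V t)"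
proof -
  have "\<forall>\<^sub>F t in F. \<forall>i\<in>{1..n}. \<bar>V t i - w i\<bar> < (w j - kth_val n k w) / 2"
    using assms(4,5) by (intro eventually_uniformly_close) auto
  then show ?thesis
    by (rule eventually_mono) (rule mem_topk_if_close[OF assms(1-3)])
qed

lemma eventually_not_mem_topk:
  assumes "1 \<le> k" "k \<le> n" "j \<in> {1..n}" "w j < kth_val n k w"
    and "\<And>i. i \<in> {1..n} \<Longrightarrow> ((\<lambda>t. V t i) \<longlongrightarrow> w i) F"
  shows "\<forall>\<^sub>F t in F. j \<notin> topk n k (V t)"
proof -
  have "\<forall>\<^sub>F t in F. \<forall>i\<in>{1..n}. \<bar>V t i - w i\<bar> < (kth_val n k w - w j) / 2"
    using assms(4,5) by (intro eventually_uniformly_close) auto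
  then show ?thesis
    by (rule eventually_mono) (rule not_mem_topk_if_close[OF assms(1-3)])
qed

lemma frequently_enumerate_iff:
  fixes A :: "nat set"
  assumes "infinite A"
  shows "(\<exists>\<^sub>F s in sequentially. P (enumerate A s)) \<longleftrightarrow> (\<exists>\<^sub>F t in sequentially. t \<in> A \<and> P t)"
  unfolding frequently_sequentially
proof (intro iffI allI)
  fix N
  assume "\<forall>N. \<exists>s\<ge>N. P (enumerate A s)"
  then obtain s where "s \<ge> N" "P (enumerate A s)"
    by blast
  then show "\<exists>t\<ge>N. t \<in> A \<and> P t"
    using le_enumerate[OF assms, of s] enumerate_in_set[OF assms] by (meson order_trans)
next
  fix N
  assume "\<forall>N. \<exists>t\<ge>N. t \<in> A \<and> P t"
  then obtain t where t: "t \<ge> enumerate A N" "t \<in> A" "P t"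
    by blast
  then obtain s where "enumerate A s = t"
    using enumerate_Ex[OF assms] by blast
  then show "\<exists>s\<ge>N. P (enumerate A s)"
    using t assms by auto
qed

locale top_k_gossip =
  fixes m n k :: nat and i1 i2 :: "nat \<Rightarrow> nat" and X0 Xinf :: "nat \<Rightarrow> nat \<Rightarrow> real"
  assumes k_pos: "1 \<le> k" and k_le_n: "k \<le> n"
    and agents_in_range: "\<And>t. i1 t \<in> {1..m} \<and> i2 t \<in> {1..m}"
    and converges: "\<forall>i\<in>{1..m}. \<forall>j\<in>{1..n}. (\<lambda>t. gossip n k i1 i2 X0 t i j) \<longlonglongrightarrow> Xinf i j"
begin

abbreviation X :: "nat \<Rightarrow> nat \<Rightarrow> nat \<Rightarrow> real" where "X t \<equiv> gossip n k i1 i2 X0 t"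
abbreviation S :: "nat \<Rightarrow> nat set" where "S t \<equiv> selS n k i1 i2 X0 t"
abbreviation S_inf :: "nat set \<Rightarrow> nat set" where "S_inf e \<equiv> Sinf n k i1 i2 X0 e"

definition lim_kth :: "nat \<Rightarrow> real" where "lim_kth i = kth_val n k (Xinf i)"

lemma frequently_activated:
  assumes "e \<in> edges i1 i2"
  shows "\<exists>\<^sub>F t in sequentially. {i1 t, i2 t} = e"
  using assms by (simp add: edges_def frequently_cofinite flip: cofinite_eq_sequentially)

lemma edge_in_range:
  assumes "{a, b} \<in> edges i1 i2"
  shows "a \<in> {1..m}" "b \<in> {1..m}"
proof -
  obtain t where "{i1 t, i2 t} = {a, b}"
    using frequently_ex[OF frequently_activated[OF assms]] by blast
  then show "a \<in> {1..m}" "b \<in> {1..m}"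
    using agents_in_range[of t] by (auto simp: doubleton_eq_iff)
qed

lemma mem_S_inf_iff:
  assumes "e \<in> edges i1 i2"
  shows "j \<in> S_inf e \<longleftrightarrow> (\<exists>\<^sub>F t in sequentially. {i1 t, i2 t} = e \<and> j \<in> S t)"
proof -
  have "infinite {t. {i1 t, i2 t} = e}"
    using assms by (simp add: edges_def)
  then show ?thesis
    using frequently_enumerate_iff[of "{t. {i1 t, i2 t} = e}" "\<lambda>t. j \<in> S t"]
    by (simp add: Sinf_def beta_def frequently_sequentially Bex_def)
qed

lemma S_inf_subset: "S_inf e \<subseteq> {1..n}"
  by (auto simp: Sinf_def selS_def topk_def)

lemma selS_activated:
  assumes "{i1 t, i2 t} = {a, b}"
  shows "S t = topk n k (X t a) \<union> topk n k (X t b)"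
  using assms by (auto simp: selS_def doubleton_eq_iff)

lemma gossip_Suc_agree:
  assumes "{i1 t, i2 t} = {a, b}" "j \<in> S t"
  shows "X (Suc t) a j = X (Suc t) b j"
  using assms by (auto simp: selS_def Let_def doubleton_eq_iff add.commute)

lemma eventually_mem_topk_row:
  assumes "a \<in> {1..m}" "j \<in> {1..n}" "lim_kth a < Xinf a j"
  shows "\<forall>\<^sub>F t in sequentially. j \<in> topk n k (X t a)"
  using assms converges by (intro eventually_mem_topk[OF k_pos k_le_n]) (auto simp: lim_kth_def)

lemma eventually_not_mem_topk_row:
  assumes "a \<in> {1..m}" "j \<in> {1..n}" "Xinf a j < lim_kth a"
  shows "\<forall>\<^sub>F t in sequentially. j \<notin> topk n k (X t a)"
  using assms converges by (intro eventually_not_mem_topk[OF k_pos k_le_n]) (auto simp: lim_kth_def)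

lemma limits_agree_on_S_inf:
  assumes e: "{a, b} \<in> edges i1 i2" and j: "j \<in> S_inf {a, b}"
  shows "Xinf a j = Xinf b j"
proof (rule ccontr)
  assume ne: "Xinf a j \<noteq> Xinf b j"
  have "j \<in> {1..n}"
    using j S_inf_subset by blast
  then have "(\<lambda>t. X (Suc t) a j - X (Suc t) b j) \<longlonglongrightarrow> Xinf a j - Xinf b j"
    using converges edge_in_range[OF e] by (intro tendsto_diff LIMSEQ_Suc) auto
  then have "\<forall>\<^sub>F t in sequentially. X (Suc t) a j - X (Suc t) b j \<noteq> 0"
    using ne by (intro tendsto_imp_eventually_ne) auto
  then have "\<not> (\<exists>\<^sub>F t in sequentially. X (Suc t) a j = X (Suc t) b j)"
    by (simp add: not_frequently)
  moreover have "\<exists>\<^sub>F t in sequentially. X (Suc t) a j = X (Suc t) b j"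
    using j e gossip_Suc_agree by (auto simp: mem_S_inf_iff elim!: frequently_elim1)
  ultimately show False
    by contradiction
qed

lemma mem_S_inf_if_above_kth:
  assumes e: "{a, b} \<in> edges i1 i2" and j: "j \<in> {1..n}" and above: "lim_kth a < Xinf a j"
  shows "j \<in> S_inf {a, b}"
proof -
  have "\<forall>\<^sub>F t in sequentially. j \<in> topk n k (X t a)"
    using edge_in_range(1)[OF e] j above by (rule eventually_mem_topk_row)
  then have "\<exists>\<^sub>F t in sequentially. {i1 t, i2 t} = {a, b} \<and> j \<in> topk n k (X t a)"
    by (rule frequently_eventually_frequently[OF frequently_activated[OF e]])
  then show ?thesis
    using e by (auto simp: mem_S_inf_iff selS_activated[of _ a b] elim!: frequently_elim1)
qed

lemma S_inf_above_kth:
  assumes e: "{a, b} \<in> edges i1 i2" and j: "j \<in> S_inf {a, b}"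
  shows "lim_kth a \<le> Xinf a j \<or> lim_kth b \<le> Xinf b j"
proof (rule ccontr)
  assume "\<not> ?thesis"
  moreover have "j \<in> {1..n}"
    using j S_inf_subset by blast
  ultimately have "\<forall>\<^sub>F t in sequentially. j \<notin> topk n k (X t a) \<and> j \<notin> topk n k (X t b)"
    using edge_in_range[OF e] by (intro eventually_conj eventually_not_mem_topk_row) auto
  then have "\<forall>\<^sub>F t in sequentially. \<not> ({i1 t, i2 t} = {a, b} \<and> j \<in> S t)"
    by (rule eventually_mono) (auto simp: selS_activated[of _ a b])
  then have "\<not> (\<exists>\<^sub>F t in sequentially. {i1 t, i2 t} = {a, b} \<and> j \<in> S t)"
    by (simp only: not_frequently)
  then show False
    using j by (simp add: mem_S_inf_iff[OF e])
qed

lemma eventually_topk_in_S_inf: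
  assumes e: "{a, b} \<in> edges i1 i2" and j: "j \<in> {1..n}"
  shows "\<forall>\<^sub>F t in sequentially. {i1 t, i2 t} = {a, b} \<longrightarrow> j \<in> topk n k (X t a) \<longrightarrow>
      j \<in> S_inf {a, b} \<and> lim_kth a \<le> Xinf a j"
proof (cases "j \<in> S_inf {a, b}")
  case False
  then have "\<forall>\<^sub>F t in sequentially. \<not> ({i1 t, i2 t} = {a, b} \<and> j \<in> S t)"
    using e by (simp add: mem_S_inf_iff not_frequently)
  then show ?thesis
    by (rule eventually_mono) (auto simp: selS_activated[of _ a b])
next
  case True
  show ?thesis
  proof (cases "Xinf a j < lim_kth a")
    case True
    then show ?thesis
      using eventually_not_mem_topk_row[OF edge_in_range(1)[OF e] j] by (auto elim!: eventually_mono)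
  next
    case False
    then show ?thesis
      using \<open>j \<in> S_inf {a, b}\<close> by simp
  qed
qed

lemma topk_subset_S_inf:
  assumes e: "{a, b} \<in> edges i1 i2"
  obtains t where "topk n k (X t a) \<subseteq> {j \<in> S_inf {a, b}. lim_kth a \<le> Xinf a j}"
proof -
  have "\<forall>\<^sub>F t in sequentially. \<forall>j\<in>{1..n}. {i1 t, i2 t} = {a, b} \<longrightarrow>
      j \<in> topk n k (X t a) \<longrightarrow> j \<in> S_inf {a, b} \<and> lim_kth a \<le> Xinf a j"
    using eventually_topk_in_S_inf[OF e] by (intro eventually_ball_finite) auto
  then have "\<forall>\<^sub>F t in sequentially. {i1 t, i2 t} = {a, b} \<longrightarrow>
      topk n k (X t a) \<subseteq> {j \<in> S_inf {a, b}. lim_kth a \<le> Xinf a j}"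
    by (rule eventually_mono) (use topk_subset in blast)
  then have "\<exists>\<^sub>F t in sequentially. topk n k (X t a) \<subseteq> {j \<in> S_inf {a, b}. lim_kth a \<le> Xinf a j}"
    using frequently_activated[OF e] by (auto elim!: frequently_rev_mp)
  then show ?thesis
    using frequently_ex that by blast
qed

lemma lim_kth_le_edge:
  assumes e: "{a, b} \<in> edges i1 i2"
  shows "lim_kth a \<le> lim_kth b"
proof (rule ccontr)
  assume less: "\<not> lim_kth a \<le> lim_kth b"
  obtain t where t: "topk n k (X t a) \<subseteq> {j \<in> S_inf {a, b}. lim_kth a \<le> Xinf a j}"
    using topk_subset_S_inf[OF e] .
  have "kth_val n k (Xinf b) < Xinf b j" if "j \<in> topk n k (X t a)" for j
  proof -
    have "j \<in> S_inf {a, b}" and "lim_kth a \<le> Xinf a j"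
      using t that by auto
    then show ?thesis
      using limits_agree_on_S_inf[OF e] less by (simp add: lim_kth_def)
  qed
  then have "topk n k (X t a) \<subseteq> {j \<in> {1..n}. kth_val n k (Xinf b) < Xinf b j}"
    using topk_subset by blast
  then show False
    using topk_not_subset_above_kth_val[OF k_pos k_le_n] by blast
qed

lemma lim_kth_edge_eq:
  assumes "{a, b} \<in> edges i1 i2"
  shows "lim_kth a = lim_kth b"
  using assms lim_kth_le_edge[of a b] lim_kth_le_edge[of b a] by (simp add: insert_commute)

lemma S_inf_nonempty:
  assumes e: "{a, b} \<in> edges i1 i2"
  shows "S_inf {a, b} \<noteq> {}"
proof -
  obtain t where t: "topk n k (X t a) \<subseteq> {j \<in> S_inf {a, b}. lim_kth a \<le> Xinf a j}"
    using topk_subset_S_inf[OF e] .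
  moreover have "topk n k (X t a) \<noteq> {}"
    using card_topk_ge[OF k_le_n, of "X t a"] k_pos by auto
  ultimately show ?thesis
    by blast
qed

lemma lim_kth_le_alpha:
  assumes e: "{a, b} \<in> edges i1 i2"
  shows "lim_kth a \<le> alpha n k i1 i2 X0 Xinf a b"
proof -
  have "lim_kth a \<le> Xinf a j" if "j \<in> S_inf {a, b}" for j
    using S_inf_above_kth[OF e that] limits_agree_on_S_inf[OF e that] lim_kth_edge_eq[OF e] by auto
  then show ?thesis
    using S_inf_nonempty[OF e] finite_subset[OF S_inf_subset] by (simp add: alpha_def Min_ge_iff)
qed

lemma lim_kth_eq_if_connected:
  assumes "(p, q) \<in> {(u, v). {u, v} \<in> edges i1 i2}\<^sup>*"
  shows "lim_kth p = lim_kth q"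
  using assms by (induction rule: rtrancl_induct) (auto dest: lim_kth_edge_eq)

lemma above_lim_kth_if_connected:
  assumes "(p, q) \<in> {(u, v). {u, v} \<in> edges i1 i2}\<^sup>*" and j: "j \<in> {1..n}"
    and "lim_kth p < Xinf p j"
  shows "lim_kth q < Xinf q j"
  using assms(1)
proof (induction rule: rtrancl_induct)
  case base
  show ?case
    using assms(3) .
next
  case (step y z)
  then have e: "{y, z} \<in> edges i1 i2"
    by simp
  then have "j \<in> S_inf {y, z}"
    using mem_S_inf_if_above_kth j step.IH by blast
  then show ?case
    using step.IH limits_agree_on_S_inf[OF e] lim_kth_edge_eq[OF e] by simp
qed

end

theorem mainTheorem6:
  fixes m n k :: nat and i1 i2 :: "nat \<Rightarrow> nat" and X0 Xinf :: "nat \<Rightarrow> nat \<Rightarrow> real"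
    and a b i j :: nat
  assumes "m \<ge> 2" and "n \<ge> 1" and "1 \<le> k" and "k \<le> n"
    and "\<forall>t. i1 t \<in> {1..m} \<and> i2 t \<in> {1..m} \<and> i1 t \<noteq> i2 t"
    and "graph_connected m (edges i1 i2)"
    and "\<forall>i'\<in>{1..m}. \<forall>j'\<in>{1..n}. (\<lambda>t. gossip n k i1 i2 X0 t i' j') \<longlonglongrightarrow> Xinf i' j'"
    and "{a, b} \<in> edges i1 i2"
    and "j \<in> {1..n}" and "i \<in> {1..m}"
    and "Xinf i j > alpha n k i1 i2 X0 Xinf a b"
  shows "\<forall>e\<in>edges i1 i2. j \<in> Sinf n k i1 i2 X0 e"
proof
  interpret top_k_gossip m n k i1 i2 X0 Xinf
    using assms(3,4,5,7) by unfold_locales auto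
  fix e
  assume e: "e \<in> edges i1 i2"
  then obtain c d where cd: "e = {c, d}"
    using frequently_ex[OF frequently_activated[OF e]] by blast
  have "(a, i) \<in> {(u, v). {u, v} \<in> edges i1 i2}\<^sup>*" "(i, c) \<in> {(u, v). {u, v} \<in> edges i1 i2}\<^sup>*"
    using edge_in_range assms(6,8,10) e cd unfolding graph_connected_def by auto
  moreover have "lim_kth a < Xinf i j"
    using lim_kth_le_alpha[OF assms(8)] assms(11) by linarith
  ultimately have "lim_kth c < Xinf c j"
    using above_lim_kth_if_connected assms(9) lim_kth_eq_if_connected by metis
  then show "j \<in> Sinf n k i1 i2 X0 e"
    using mem_S_inf_if_above_kth e cd assms(9) by blast
qed

end
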